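(* Let $d=1$, $x\in\mathbb R$, high frequency sampling, and $f$ continuous and bounded. Assume: (i) $\|g_u\|_\infty\le\pi(u)$, where $(1+u)\pi(u)$ is integrable on $(0,\infty)$ and $u\pi(u)$ is bounded and ultimately decreasing; moreover $g_u$ is continuous at $(x,x)$ for every $u>0$; (ii) $\sup_{(y,z)\in\mathbb R^2}|\sum_{r\ge1}\delta_ng_{r\delta_n}(y,z)-\int_0^\infty g_u(y,z)du|\to0$ as $\delta_n\downarrow0$. If $\delta_n=o(h_n)$, then $$\lim_{n\to\infty}T_n\mathrm{Var}(\hat f_n^{FP}(x))=2\int_0^\infty g_u(x,x)du.$$
   Context: Let $\{X_t,t\in\mathbb R\}$ be a measurable real-valued process. Every $X_t$ has Lebesgue density $f$. For $s\ne t$ the pair $(X_s,X_t)$ has a joint density $f_{(X_s,X_t)}=f_{(X_0,X_{|t-s|})}=:f_{|t-s|}$. For $u>0$ put $g_u(y,z)=f_u(y,z)-f(y)f(z)$. High frequency sampling: $t_k=k\delta_n$, with $\delta_n\to0$ and $T_n=n\delta_n\to\infty$. Frequency polygon. Let $h_n\to0$ with $nh_n\to\infty$. Bins are $[b_j,b_{j+1})$ of width $h_n$ with midpoints $c_j$. Set $\hat f_j=\frac1{nh_n}\sum_{k=1}^n\mathbf 1_{[b_j,b_{j+1})}(X_{t_k})$ and $\hat f_n^{FP}(x)=\frac{x-c_j}{h_n}\hat f_{j+1}+\frac{c_{j+1}-x}{h_n}\hat f_j$ for $x\in[c_j,c_{j+1})$. *)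

theory Defs
  imports "HOL-Probability.Probability"
begin

definition bin_left :: "real \<Rightarrow> real \<Rightarrow> int \<Rightarrow> real" where
  "bin_left a h j = a + real_of_int j * h"

definition bin_mid :: "real \<Rightarrow> real \<Rightarrow> int \<Rightarrow> real" where
  "bin_mid a h j = bin_left a h j + h / 2"

definition poly_index :: "real \<Rightarrow> real \<Rightarrow> real \<Rightarrow> int" where
  "poly_index a h x = \<lfloor>(x - a - h / 2) / h\<rfloor>"

definition hist_val ::
  "(real \<Rightarrow> 'a \<Rightarrow> real) \<Rightarrow> real \<Rightarrow> nat \<Rightarrow> real \<Rightarrow> real \<Rightarrow> int \<Rightarrow> 'a \<Rightarrow> real" where
  "hist_val X delta n a h j \<omega> =
     (1 / (real n * h)) *
       (\<Sum>k = 1..n. indicator {bin_left a h j ..< bin_left a h (j + 1)} (X (real k * delta) \<omega>))"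

definition freq_poly ::
  "(real \<Rightarrow> 'a \<Rightarrow> real) \<Rightarrow> real \<Rightarrow> nat \<Rightarrow> real \<Rightarrow> real \<Rightarrow> real \<Rightarrow> 'a \<Rightarrow> real" where
  "freq_poly X delta n a h x \<omega> =
     (let j = poly_index a h x in
       (x - bin_mid a h j) / h * hist_val X delta n a h (j + 1) \<omega>
       + (bin_mid a h (j + 1) - x) / h * hist_val X delta n a h j \<omega>)"

definition gcov :: "(real \<Rightarrow> real \<times> real \<Rightarrow> real) \<Rightarrow> (real \<Rightarrow> real) \<Rightarrow> real \<Rightarrow> real \<times> real \<Rightarrow> real" where
  "gcov fj f u p = fj u p - f (fst p) * f (snd p)"

end

theory Submission
  imports Defs
begin

text \<open>
  The frequency polygon at x is a kernel estimator: it averages fp_kernel (two adjacent bins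
  with linear interpolation weights, total mass h) over the observations X(k delta).  For a
  process with stationary one- and two-dimensional densities, the variance of such an average
  has Toeplitz structure, and T_n Var splits into
    (a) a diagonal term delta / h^2 Var(K(X 0)) = O(delta / h), which vanishes as delta = o(h);
    (b) twice a Cesaro-weighted Riemann sum (mesh delta) of the autocovariance densities g_u,
        averaged against the normalised product kernel concentrating at (x, x).
  For (b), the Cesaro weights cost O(1 / T_n) thanks to the Riemann sum bound for the
  ultimately decreasing u pi(u); the Riemann sums converge uniformly to the integral of g_u;
  and that integral is continuous at (x, x) by dominated convergence.  Hence (b) tends to the
  integral of g_u(x, x) over u > 0.
\<close>

lemma integrable_tensor_lborel:
  fixes A B :: "real \<Rightarrow> real"
  assumes A: "integrable lborel A" and B: "integrable lborel B"
  shows "integrable (lborel \<Otimes>\<^sub>M lborel) (\<lambda>p. A (fst p) * B (snd p))"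
proof -
  have [measurable]: "A \<in> borel_measurable lborel" "B \<in> borel_measurable lborel"
    using A B by auto
  have "(\<integral>\<^sup>+p. ennreal (norm (A (fst p) * B (snd p))) \<partial>(lborel \<Otimes>\<^sub>M lborel))
      = (\<integral>\<^sup>+y. \<integral>\<^sup>+z. ennreal (norm (A y)) * ennreal (norm (B z)) \<partial>lborel \<partial>lborel)"
    using lborel.nn_integral_fst[of "\<lambda>p. ennreal (norm (A (fst p))) * ennreal (norm (B (snd p)))" lborel]
    by (simp add: abs_mult ennreal_mult)
  also have "\<dots> = (\<integral>\<^sup>+y. ennreal (norm (A y)) \<partial>lborel) * (\<integral>\<^sup>+z. ennreal (norm (B z)) \<partial>lborel)"
    by (simp add: nn_integral_cmult nn_integral_multc)
  also have "\<dots> < \<infinity>"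
    using A B unfolding integrable_iff_bounded by (simp add: ennreal_mult_less_top)
  finally show ?thesis unfolding integrable_iff_bounded by auto
qed

lemma integral_tensor_lborel:
  fixes A B :: "real \<Rightarrow> real"
  assumes A: "integrable lborel A" and B: "integrable lborel B"
  shows "(\<integral>p. A (fst p) * B (snd p) \<partial>(lborel \<Otimes>\<^sub>M lborel)) = integral\<^sup>L lborel A * integral\<^sup>L lborel B"
  using lborel_pair.integral_fst[of "\<lambda>y z. A y * B z", symmetric] integrable_tensor_lborel[OF A B]
  by (simp add: case_prod_beta')

lemma (in prob_space) variance_scaled_sum:
  fixes Z :: "nat \<Rightarrow> 'a \<Rightarrow> real"
  assumes meas: "\<And>k. Z k \<in> borel_measurable M"
    and bnd: "\<And>k \<omega>. \<bar>Z k \<omega>\<bar> \<le> B" and fin: "finite I"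
  shows "variance (\<lambda>\<omega>. c * (\<Sum>k\<in>I. Z k \<omega>))
     = c\<^sup>2 * (\<Sum>k\<in>I. \<Sum>l\<in>I. expectation (\<lambda>\<omega>. Z k \<omega> * Z l \<omega>) - expectation (Z k) * expectation (Z l))"
proof -
  have iZ: "integrable M (Z k)" for k
    using bnd meas by (intro integrable_const_bound[where B=B]) auto
  have iZZ: "integrable M (\<lambda>\<omega>. Z k \<omega> * Z l \<omega>)" for k l
    using bnd meas by (intro integrable_const_bound[where B="B * B"])
      (auto simp: abs_mult intro!: mult_mono order_trans[OF abs_ge_zero bnd])
  have sq: "(c * (\<Sum>k\<in>I. Z k \<omega>))\<^sup>2 = c\<^sup>2 * (\<Sum>k\<in>I. \<Sum>l\<in>I. Z k \<omega> * Z l \<omega>)" for \<omega>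
    by (simp add: power2_eq_square sum_product algebra_simps)
  have sqE: "(c * (\<Sum>k\<in>I. expectation (Z k)))\<^sup>2
      = c\<^sup>2 * (\<Sum>k\<in>I. \<Sum>l\<in>I. expectation (Z k) * expectation (Z l))"
    by (simp add: power2_eq_square sum_product algebra_simps)
  have "variance (\<lambda>\<omega>. c * (\<Sum>k\<in>I. Z k \<omega>))
      = expectation (\<lambda>\<omega>. (c * (\<Sum>k\<in>I. Z k \<omega>))\<^sup>2) - (expectation (\<lambda>\<omega>. c * (\<Sum>k\<in>I. Z k \<omega>)))\<^sup>2"
    using iZ iZZ by (intro variance_eq) (auto simp: sq)
  also have "\<dots> = c\<^sup>2 * (\<Sum>k\<in>I. \<Sum>l\<in>I. expectation (\<lambda>\<omega>. Z k \<omega> * Z l \<omega>))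
      - (c * (\<Sum>k\<in>I. expectation (Z k)))\<^sup>2"
    unfolding sq using iZ iZZ by (simp add: Bochner_Integration.integral_sum)
  finally show ?thesis
    unfolding sqE by (simp add: sum_subtractf right_diff_distrib)
qed

lemma set_integrable_from_weighted:
  fixes \<pi> :: "real \<Rightarrow> real"
  assumes int: "set_integrable lborel {0<..} (\<lambda>u. (1 + u) * \<pi> u)"
    and nonneg: "\<And>u. 0 < u \<Longrightarrow> 0 \<le> \<pi> u"
  shows "set_integrable lborel {0<..} \<pi>" "set_integrable lborel {0<..} (\<lambda>u. u * \<pi> u)"
proof -
  have m: "(\<lambda>u. indicator {0<..} u * ((1 + u) * \<pi> u)) \<in> borel_measurable lborel"
    using int unfolding set_integrable_def by auto
  have "(\<lambda>u. indicator {0<..} u * ((1 + u) * \<pi> u) * (1 / (1 + u))) \<in> borel_measurable lborel"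
    "(\<lambda>u. indicator {0<..} u * ((1 + u) * \<pi> u) * (u / (1 + u))) \<in> borel_measurable lborel"
    using m by measurable
  moreover have "(\<lambda>u. indicator {0<..} u * ((1 + u) * \<pi> u) * (1 / (1 + u))) = (\<lambda>u. indicator {0<..} u * \<pi> u)"
    "(\<lambda>u. indicator {0<..} u * ((1 + u) * \<pi> u) * (u / (1 + u))) = (\<lambda>u. indicator {0<..} u * (u * \<pi> u))"
    by (auto simp: indicator_def field_simps)
  ultimately have "set_borel_measurable lborel {0<..} \<pi>"
    "set_borel_measurable lborel {0<..} (\<lambda>u. u * \<pi> u)"
    unfolding set_borel_measurable_def by simp_all
  then show "set_integrable lborel {0<..} \<pi>" "set_integrable lborel {0<..} (\<lambda>u. u * \<pi> u)"
    using nonneg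
    by (auto intro!: set_integrable_bound[OF int] AE_I2 simp: mult_right_mono distrib_right)
qed

lemma isCont_parametric_set_integral:
  fixes g :: "real \<Rightarrow> 'b::metric_space \<Rightarrow> real"
  assumes A: "A \<in> sets borel" and int: "set_integrable lborel A \<pi>"
    and meas: "\<And>p. (\<lambda>u. g u p) \<in> borel_measurable borel"
    and bound: "\<And>u p. u \<in> A \<Longrightarrow> \<bar>g u p\<bar> \<le> \<pi> u"
    and cont: "\<And>u. u \<in> A \<Longrightarrow> isCont (g u) p0"
  shows "isCont (\<lambda>p. LINT u:A|lborel. g u p) p0"
proof (rule continuous_at_sequentiallyI)
  fix P assume P: "P \<longlonglongrightarrow> p0"
  show "(\<lambda>k. LINT u:A|lborel. g u (P k)) \<longlonglongrightarrow> (LINT u:A|lborel. g u p0)"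
    unfolding set_lebesgue_integral_def
  proof (rule integral_dominated_convergence[where w="\<lambda>u. indicator A u *\<^sub>R \<pi> u"])
    show "integrable lborel (\<lambda>u. indicator A u *\<^sub>R \<pi> u)"
      using int unfolding set_integrable_def .
    show "AE u in lborel. (\<lambda>k. indicator A u *\<^sub>R g u (P k)) \<longlonglongrightarrow> indicator A u *\<^sub>R g u p0"
    proof (rule AE_I2)
      fix u show "(\<lambda>k. indicator A u *\<^sub>R g u (P k)) \<longlonglongrightarrow> indicator A u *\<^sub>R g u p0"
        using isCont_tendsto_compose[OF cont P] by (cases "u \<in> A") auto
    qed
    show "\<And>k. AE u in lborel. norm (indicator A u *\<^sub>R g u (P k)) \<le> indicator A u *\<^sub>R \<pi> u"
      using bound by (auto simp: indicator_def intro!: AE_I2)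
  qed (auto intro!: borel_measurable_times borel_measurable_indicator[OF A] meas)
qed

lemma kernel_average_close:
  fixes \<Psi> W :: "'b \<Rightarrow> real"
  assumes \<Psi>_int: "integrable N \<Psi>" and \<Psi>_one: "integral\<^sup>L N \<Psi> = 1"
    and \<Psi>_nonneg: "\<And>p. 0 \<le> \<Psi> p" and \<Psi>W_int: "integrable N (\<lambda>p. \<Psi> p * W p)"
    and close: "\<And>p. \<Psi> p \<noteq> 0 \<Longrightarrow> \<bar>W p - c\<bar> \<le> \<epsilon>"
  shows "\<bar>(\<integral>p. \<Psi> p * W p \<partial>N) - c\<bar> \<le> \<epsilon>"
proof -
  have pointwise: "\<bar>\<Psi> p * W p - \<Psi> p * c\<bar> \<le> \<Psi> p * \<epsilon>" for p
    using close[of p] \<Psi>_nonneg[of p]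
    by (cases "\<Psi> p = 0") (auto simp: abs_mult right_diff_distrib[symmetric] intro: mult_left_mono)
  have "(\<integral>p. \<Psi> p * W p \<partial>N) - c = (\<integral>p. \<Psi> p * W p - \<Psi> p * c \<partial>N)"
    using \<Psi>_int \<Psi>W_int \<Psi>_one by simp
  also have "\<bar>\<dots>\<bar> \<le> (\<integral>p. \<bar>\<Psi> p * W p - \<Psi> p * c\<bar> \<partial>N)"
    using integral_norm_bound[of N "\<lambda>p. \<Psi> p * W p - \<Psi> p * c"] by simp
  also have "\<dots> \<le> (\<integral>p. \<Psi> p * \<epsilon> \<partial>N)"
    using \<Psi>_int \<Psi>W_int pointwise by (intro integral_mono) auto
  also have "\<dots> = \<epsilon>" using \<Psi>_one by simp
  finally show ?thesis .
qed

lemma kernel_average_tendsto: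
  fixes \<Psi> W :: "nat \<Rightarrow> 'b \<Rightarrow> real"
  assumes \<Psi>_int: "\<And>n. integrable N (\<Psi> n)" and \<Psi>_one: "\<And>n. integral\<^sup>L N (\<Psi> n) = 1"
    and \<Psi>_nonneg: "\<And>n p. 0 \<le> \<Psi> n p" and \<Psi>W_int: "\<And>n. integrable N (\<lambda>p. \<Psi> n p * W n p)"
    and close: "\<And>e. 0 < e \<Longrightarrow> eventually (\<lambda>n. \<forall>p. \<Psi> n p \<noteq> 0 \<longrightarrow> \<bar>W n p - c\<bar> \<le> e) sequentially"
  shows "(\<lambda>n. \<integral>p. \<Psi> n p * W n p \<partial>N) \<longlonglongrightarrow> c"
  unfolding tendsto_iff dist_real_def
proof (intro allI impI)
  fix e :: real assume e: "0 < e"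
  have "eventually (\<lambda>n. \<forall>p. \<Psi> n p \<noteq> 0 \<longrightarrow> \<bar>W n p - c\<bar> \<le> e / 2) sequentially"
    by (rule close) (use e in simp)
  then show "eventually (\<lambda>n. \<bar>(\<integral>p. \<Psi> n p * W n p \<partial>N) - c\<bar> < e) sequentially"
  proof (rule eventually_mono)
    fix n assume "\<forall>p. \<Psi> n p \<noteq> 0 \<longrightarrow> \<bar>W n p - c\<bar> \<le> e / 2"
    then have "\<bar>(\<integral>p. \<Psi> n p * W n p \<partial>N) - c\<bar> \<le> e / 2"
      by (intro kernel_average_close[OF \<Psi>_int \<Psi>_one \<Psi>_nonneg \<Psi>W_int]) auto
    then show "\<bar>(\<integral>p. \<Psi> n p * W n p \<partial>N) - c\<bar> < e" using e by simp
  qed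
qed

lemma double_sum_abs_diff:
  fixes c :: "nat \<Rightarrow> real"
  shows "(\<Sum>k<n. \<Sum>l<n. c (nat \<bar>int k - int l\<bar>))
       = real n * c 0 + 2 * (\<Sum>r<n. real (n - Suc r) * c (Suc r))"
proof (induction n)
  case 0
  then show ?case by simp
next
  case (Suc n)
  have row: "(\<Sum>l<n. c (nat \<bar>int n - int l\<bar>)) = (\<Sum>r<n. c (Suc r))"
  proof -
    have "(\<Sum>l<n. c (nat \<bar>int n - int l\<bar>)) = (\<Sum>l<n. c (n - l))"
      by (intro sum.cong) (auto simp: nat_diff_distrib)
    also have "\<dots> = (\<Sum>r<n. c (Suc r))"
      by (rule sum.reindex_bij_witness[where i="\<lambda>r. n - Suc r" and j="\<lambda>l. n - Suc l"])
        (auto simp: Suc_diff_Suc)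
    finally show ?thesis .
  qed
  have col: "(\<Sum>k<n. c (nat \<bar>int k - int n\<bar>)) = (\<Sum>r<n. c (Suc r))"
    using row by (simp add: abs_minus_commute)
  have weights: "(\<Sum>r<n. real (n - Suc r) * c (Suc r)) + (\<Sum>r<n. c (Suc r))
      = (\<Sum>r<Suc n. real (Suc n - Suc r) * c (Suc r))"
    by (simp add: sum.distrib[symmetric] algebra_simps Suc_diff_Suc of_nat_diff)
  have "(\<Sum>k<Suc n. \<Sum>l<Suc n. c (nat \<bar>int k - int l\<bar>))
     = (\<Sum>k<n. \<Sum>l<n. c (nat \<bar>int k - int l\<bar>)) + (\<Sum>k<n. c (nat \<bar>int k - int n\<bar>))
       + (\<Sum>l<n. c (nat \<bar>int n - int l\<bar>)) + c 0"
    by (simp add: sum.distrib)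
  also have "\<dots> = real (Suc n) * c 0 + 2 * (\<Sum>r<Suc n. real (Suc n - Suc r) * c (Suc r))"
    unfolding Suc.IH row col weights[symmetric] by (simp add: algebra_simps)
  finally show ?case .
qed

lemma riemann_sum_le_integral:
  fixes \<Phi> :: "real \<Rightarrow> real"
  assumes d: "0 < d" and \<Phi>_int: "integrable lborel \<Phi>" and \<Phi>_nonneg: "\<And>u. 0 \<le> \<Phi> u"
    and below: "\<And>r u. r < N \<Longrightarrow> real r * d < u \<Longrightarrow> u \<le> real (Suc r) * d \<Longrightarrow> c r \<le> \<Phi> u"
  shows "(\<Sum>r<N. d * c r) \<le> integral\<^sup>L lborel \<Phi>"
proof -
  define I where "I r = {real r * d <.. real (Suc r) * d}" for r
  define s where "s u = (\<Sum>r<N. c r * indicator (I r) u)" for u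
  have I_int: "integrable lborel (indicator (I r) :: real \<Rightarrow> real)" for r
    unfolding I_def using d by (auto simp: integrable_indicator_iff)
  have I_len: "integral\<^sup>L lborel (indicator (I r) :: real \<Rightarrow> real) = d" for r
    unfolding I_def using d by (simp add: measure_def algebra_simps)
  have I_disjoint: "r = r'" if "u \<in> I r" "u \<in> I r'" for u r r'
  proof -
    from that have "real r * d < real (Suc r') * d" "real r' * d < real (Suc r) * d"
      unfolding I_def by auto
    then have "real r < real (Suc r')" "real r' < real (Suc r)" using d by auto
    then show ?thesis by linarith
  qed
  have s_int: "integrable lborel s"
    unfolding s_def[abs_def] using I_int by (intro Bochner_Integration.integrable_sum integrable_mult_right)
  have "integral\<^sup>L lborel s = (\<Sum>r<N. c r * integral\<^sup>L lborel (indicator (I r) :: real \<Rightarrow> real))"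
    unfolding s_def[abs_def] using I_int by (subst Bochner_Integration.integral_sum) auto
  then have s_integral: "integral\<^sup>L lborel s = (\<Sum>r<N. d * c r)"
    unfolding I_len by (simp add: mult.commute)
  have "s u \<le> \<Phi> u" for u
  proof (cases "\<exists>r<N. u \<in> I r")
    case False
    then have "s u = 0" unfolding s_def by (intro sum.neutral) auto
    then show ?thesis using \<Phi>_nonneg by simp
  next
    case True
    then obtain r0 where r0: "r0 < N" "u \<in> I r0" by blast
    have "s u = (\<Sum>r\<in>{r0}. c r * indicator (I r) u)"
      unfolding s_def using r0 I_disjoint
      by (intro sum.mono_neutral_right) (auto simp: indicator_def)
    also have "\<dots> = c r0" using r0(2) by simp
    finally show ?thesis using below[OF r0(1)] r0(2) unfolding I_def by simp
  qed
  then show ?thesis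
    using integral_mono[OF s_int \<Phi>_int] unfolding s_integral by simp
qed

lemma riemann_sum_bound_ult_decreasing:
  fixes \<psi> :: "real \<Rightarrow> real"
  assumes nonneg: "\<And>u. 0 < u \<Longrightarrow> 0 \<le> \<psi> u" and bounded: "\<And>u. 0 < u \<Longrightarrow> \<psi> u \<le> B"
    and decr: "\<And>u v. U \<le> u \<Longrightarrow> u \<le> v \<Longrightarrow> \<psi> v \<le> \<psi> u" and U: "0 \<le> U"
    and int: "set_integrable lborel {0<..} \<psi>"
    and d: "0 < d" "d \<le> 1"
  shows "(\<Sum>r<N. d * \<psi> (real (Suc r) * d)) \<le> (LINT u:{0<..}|lborel. \<psi> u) + B * (U + 1)"
proof -
  define \<Phi> where "\<Phi> u = indicator {0<..} u * \<psi> u + B * indicator {0<..U + 1} u" for u :: real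
  have B: "0 \<le> B" using nonneg[of 1] bounded[of 1] by simp
  have box_int: "integrable lborel (indicator {0<..U + 1} :: real \<Rightarrow> real)"
    using U by (auto simp: integrable_indicator_iff)
  have \<Phi>_int: "integrable lborel \<Phi>"
    unfolding \<Phi>_def[abs_def] using int box_int by (auto simp: set_integrable_def)
  have \<Phi>_integral: "integral\<^sup>L lborel \<Phi> = (LINT u:{0<..}|lborel. \<psi> u) + B * (U + 1)"
    unfolding \<Phi>_def[abs_def] using int box_int U
    by (simp add: set_integrable_def set_lebesgue_integral_def measure_def)
  have "\<psi> (real (Suc r) * d) \<le> \<Phi> u" if u: "real r * d < u" "u \<le> real (Suc r) * d" for r u
  proof -
    have u0: "0 < u" using u d by (smt (verit) mult_nonneg_nonneg of_nat_0_le_iff)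
    show ?thesis
    proof (cases "U \<le> real r * d")
      case True
      then have "\<psi> (real (Suc r) * d) \<le> \<psi> u" using decr u by auto
      then show ?thesis unfolding \<Phi>_def using u0 B by (auto simp: indicator_def)
    next
      case False
      then have "u \<le> U + 1" using u d by (simp add: algebra_simps)
      then show ?thesis unfolding \<Phi>_def using u0 nonneg[of u] bounded[of "real (Suc r) * d"] d
        by (auto simp: indicator_def)
    qed
  qed
  moreover have "0 \<le> \<Phi> u" for u unfolding \<Phi>_def using nonneg B by (auto simp: indicator_def)
  ultimately have "(\<Sum>r<N. d * \<psi> (real (Suc r) * d)) \<le> integral\<^sup>L lborel \<Phi>"
    by (intro riemann_sum_le_integral[OF d(1) \<Phi>_int]) auto
  then show ?thesis unfolding \<Phi>_integral .
qed

lemma cesaro_truncation_bound: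
  fixes a b :: "nat \<Rightarrow> real"
  assumes a: "summable a" and b: "summable b" and dom: "\<And>r. real (Suc r) * \<bar>a r\<bar> \<le> b r"
    and n: "0 < n"
  shows "\<bar>suminf a - (\<Sum>r<n. real (n - Suc r) / real n * a r)\<bar> \<le> suminf b / real n"
proof -
  define e where "e r = (if r < n then real (n - Suc r) / real n * a r else 0)" for r
  define c where "c r = a r - e r" for r
  have e_sum: "suminf e = (\<Sum>r<n. real (n - Suc r) / real n * a r)"
    by (subst suminf_finite[of "{..<n}"]) (auto simp: e_def)
  have c_le: "\<bar>c r\<bar> \<le> b r / real n" for r
  proof (cases "r < n")
    case True
    then have "c r = real (Suc r) / real n * a r"
      using n by (simp add: c_def e_def of_nat_diff field_simps)
    then have "\<bar>c r\<bar> = real (Suc r) * \<bar>a r\<bar> / real n" by (simp add: abs_mult)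
    then show ?thesis using dom[of r] n by (simp add: divide_right_mono)
  next
    case False
    then have "real n * \<bar>a r\<bar> \<le> real (Suc r) * \<bar>a r\<bar>" by (intro mult_right_mono) auto
    then show ?thesis using dom[of r] n False by (simp add: c_def e_def field_simps)
  qed
  have bn: "summable (\<lambda>r. b r / real n)" using b by (rule summable_divide)
  have c_abs: "summable (\<lambda>r. \<bar>c r\<bar>)"
    by (rule summable_comparison_test[OF _ bn]) (use c_le in auto)
  have "suminf a - (\<Sum>r<n. real (n - Suc r) / real n * a r) = suminf c"
    unfolding e_sum[symmetric] c_def using a summable_finite[of "{..<n}" e]
    by (subst suminf_diff) (auto simp: e_def)
  also have "\<bar>suminf c\<bar> \<le> (\<Sum>r. \<bar>c r\<bar>)" by (rule summable_rabs[OF c_abs])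
  also have "\<dots> \<le> (\<Sum>r. b r / real n)" by (rule suminf_le[OF c_le c_abs bn])
  also have "\<dots> = suminf b / real n" using b by (simp add: suminf_divide)
  finally show ?thesis .
qed

lemma cesaro_riemann_sum_close:
  fixes \<phi> \<pi> :: "real \<Rightarrow> real"
  assumes d: "0 < d" and n: "0 < n"
    and summable: "summable (\<lambda>r. d * \<phi> (real (Suc r) * d))"
    and bound: "\<And>u. 0 < u \<Longrightarrow> \<bar>\<phi> u\<bar> \<le> \<pi> u"
    and partial: "\<And>N. (\<Sum>r<N. d * ((real (Suc r) * d) * \<pi> (real (Suc r) * d))) \<le> K"
  shows "\<bar>(\<Sum>r. d * \<phi> (real (Suc r) * d))
          - (\<Sum>r<n. d * (real (n - Suc r) / real n) * \<phi> (real (Suc r) * d))\<bar> \<le> K / (real n * d)"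
proof -
  define b where "b r = (real (Suc r) * d) * \<pi> (real (Suc r) * d)" for r
  have dom: "real (Suc r) * \<bar>d * \<phi> (real (Suc r) * d)\<bar> \<le> b r" for r
    using bound[of "real (Suc r) * d"] d unfolding b_def
    by (simp add: abs_mult mult.assoc mult_left_mono)
  have b_nonneg: "0 \<le> b r" for r using dom[of r] by (smt (verit) mult_nonneg_nonneg of_nat_0_le_iff abs_ge_zero)
  have partial_b: "(\<Sum>r<N. b r) \<le> K / d" for N
    using partial[of N] d by (simp add: b_def pos_le_divide_eq sum_distrib_left[symmetric] mult.commute)
  have b_summable: "summable b"
  proof (rule bounded_imp_summable[where B="K / d", OF b_nonneg])
    show "(\<Sum>r\<le>m. b r) \<le> K / d" for m
      using partial_b[of "Suc m"] by (simp only: lessThan_Suc_atMost)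
  qed
  have "suminf b \<le> K / d" using partial_b b_summable by (intro suminf_le_const) auto
  then have "suminf b / real n \<le> K / (real n * d)"
    using n d by (simp add: divide_right_mono field_simps)
  moreover have "(\<Sum>r<n. d * (real (n - Suc r) / real n) * \<phi> (real (Suc r) * d))
      = (\<Sum>r<n. real (n - Suc r) / real n * (d * \<phi> (real (Suc r) * d)))"
    by (simp add: algebra_simps)
  ultimately show ?thesis
    using cesaro_truncation_bound[OF summable b_summable dom n] by simp
qed

lemma cesaro_riemann_sums_uniformly_close:
  fixes g :: "real \<Rightarrow> 'b \<Rightarrow> real" and \<pi> :: "real \<Rightarrow> real" and delta :: "nat \<Rightarrow> real"
  assumes delta_pos: "\<And>n. 0 < delta n"
    and g_bound: "\<And>u p. 0 < u \<Longrightarrow> \<bar>g u p\<bar> \<le> \<pi> u"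
    and upi_int: "set_integrable lborel {0<..} (\<lambda>u. u * \<pi> u)"
    and upi_bdd: "\<And>u. 0 < u \<Longrightarrow> u * \<pi> u \<le> B"
    and upi_decr: "\<And>u v. U \<le> u \<Longrightarrow> u \<le> v \<Longrightarrow> v * \<pi> v \<le> u * \<pi> u"
    and riem_summable: "\<And>n p. summable (\<lambda>r. delta n * g (real (Suc r) * delta n) p)"
  shows "\<exists>K. \<forall>n p. 0 < n \<longrightarrow> delta n \<le> 1 \<longrightarrow>
      \<bar>(\<Sum>r. delta n * g (real (Suc r) * delta n) p)
        - (\<Sum>r<n. delta n * (real (n - Suc r) / real n) * g (real (Suc r) * delta n) p)\<bar>
      \<le> K / (real n * delta n)"
proof (intro exI allI impI)
  have \<pi>_nonneg: "0 \<le> \<pi> u" if "0 < u" for u using g_bound[OF that, of undefined] by linarith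
  define K where "K = (LINT u:{0<..}|lborel. u * \<pi> u) + B * (max U 0 + 1)"
  have K: "(\<Sum>r<M. delta n * ((real (Suc r) * delta n) * \<pi> (real (Suc r) * delta n))) \<le> K"
    if "delta n \<le> 1" for n M
    unfolding K_def using \<pi>_nonneg upi_bdd upi_decr
    by (intro riemann_sum_bound_ult_decreasing[OF _ _ _ _ upi_int delta_pos that]) auto
  fix n p assume n: "0 < n" and d: "delta n \<le> 1"
  show "\<bar>(\<Sum>r. delta n * g (real (Suc r) * delta n) p)
        - (\<Sum>r<n. delta n * (real (n - Suc r) / real n) * g (real (Suc r) * delta n) p)\<bar>
      \<le> K / (real n * delta n)"
    using n K[OF d] g_bound
    by (intro cesaro_riemann_sum_close[OF delta_pos _ riem_summable, where \<pi>=\<pi>])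
qed

lemma kernel_average_weighted_sum:
  fixes \<Psi> :: "'b \<Rightarrow> real" and g :: "real \<Rightarrow> 'b \<Rightarrow> real" and w t :: "nat \<Rightarrow> real"
  assumes \<Psi>_int: "integrable N \<Psi>" and \<Psi>_nonneg: "\<And>p. 0 \<le> \<Psi> p"
    and g_meas: "\<And>u. 0 < u \<Longrightarrow> g u \<in> borel_measurable N"
    and g_bound: "\<And>u p. 0 < u \<Longrightarrow> \<bar>g u p\<bar> \<le> \<pi> u" and t_pos: "\<And>r. 0 < t r"
  shows "(\<Sum>r<n. w r * (\<integral>p. \<Psi> p * g (t r) p \<partial>N)) = (\<integral>p. \<Psi> p * (\<Sum>r<n. w r * g (t r) p) \<partial>N)"
    and "integrable N (\<lambda>p. \<Psi> p * (\<Sum>r<n. w r * g (t r) p))"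
proof -
  have \<Psi>g_int: "integrable N (\<lambda>p. \<Psi> p * g u p)" if u: "0 < u" for u
  proof (rule Bochner_Integration.integrable_bound[OF integrable_mult_left[OF \<Psi>_int, of "\<pi> u"]])
    show "(\<lambda>p. \<Psi> p * g u p) \<in> borel_measurable N" using \<Psi>_int g_meas[OF u] by auto
    show "AE p in N. norm (\<Psi> p * g u p) \<le> norm (\<Psi> p * \<pi> u)"
      using g_bound[OF u] \<Psi>_nonneg
      by (auto simp: abs_mult intro!: AE_I2 mult_left_mono order_trans[OF _ abs_ge_self])
  qed
  have "(\<lambda>p. \<Psi> p * (\<Sum>r<n. w r * g (t r) p)) = (\<lambda>p. \<Sum>r<n. w r * (\<Psi> p * g (t r) p))"
    by (simp add: sum_distrib_left algebra_simps)
  then show "(\<Sum>r<n. w r * (\<integral>p. \<Psi> p * g (t r) p \<partial>N)) = (\<integral>p. \<Psi> p * (\<Sum>r<n. w r * g (t r) p) \<partial>N)"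
    "integrable N (\<lambda>p. \<Psi> p * (\<Sum>r<n. w r * g (t r) p))"
    using \<Psi>g_int t_pos by (simp_all add: Bochner_Integration.integral_sum)
qed

text \<open>This uses the uniform convergence
  of the Riemann sums, the truncation bound (T = n delta tends to infinity), and continuity of the
  limiting integral at p0.\<close>

lemma kernel_averaged_cesaro_limit:
  fixes g :: "real \<Rightarrow> 'b::metric_space \<Rightarrow> real" and \<pi> :: "real \<Rightarrow> real"
    and \<Psi> :: "nat \<Rightarrow> 'b \<Rightarrow> real" and N :: "'b measure" and delta \<rho> :: "nat \<Rightarrow> real"
  assumes delta_pos: "\<And>n. 0 < delta n" and delta_lim: "delta \<longlonglongrightarrow> 0"
    and T_lim: "filterlim (\<lambda>n. real n * delta n) at_top sequentially"
    and \<Psi>_nonneg: "\<And>n p. 0 \<le> \<Psi> n p" and \<Psi>_int: "\<And>n. integrable N (\<Psi> n)"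
    and \<Psi>_one: "\<And>n. integral\<^sup>L N (\<Psi> n) = 1"
    and \<Psi>_concentrates: "\<And>n p. \<Psi> n p \<noteq> 0 \<Longrightarrow> dist p p0 < \<rho> n" and \<rho>_lim: "\<rho> \<longlonglongrightarrow> 0"
    and g_meas: "\<And>u. 0 < u \<Longrightarrow> g u \<in> borel_measurable N"
    and g_bound: "\<And>u p. 0 < u \<Longrightarrow> \<bar>g u p\<bar> \<le> \<pi> u"
    and upi_int: "set_integrable lborel {0<..} (\<lambda>u. u * \<pi> u)"
    and upi_bdd: "\<And>u. 0 < u \<Longrightarrow> u * \<pi> u \<le> B"
    and upi_decr: "\<And>u v. U \<le> u \<Longrightarrow> u \<le> v \<Longrightarrow> v * \<pi> v \<le> u * \<pi> u"
    and G_cont: "isCont (\<lambda>p. LINT u:{0<..}|lborel. g u p) p0"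
    and riem_summable: "\<And>n p. summable (\<lambda>r. delta n * g (real (Suc r) * delta n) p)"
    and riem_unif: "\<And>\<epsilon>. 0 < \<epsilon> \<Longrightarrow> eventually (\<lambda>n. \<forall>p.
        \<bar>(\<Sum>r. delta n * g (real (Suc r) * delta n) p) - (LINT u:{0<..}|lborel. g u p)\<bar> \<le> \<epsilon>) sequentially"
  shows "(\<lambda>n. \<Sum>r<n. delta n * (real (n - Suc r) / real n) * (\<integral>p. \<Psi> n p * g (real (Suc r) * delta n) p \<partial>N))
           \<longlonglongrightarrow> (LINT u:{0<..}|lborel. g u p0)"
proof -
  define G where "G p = (LINT u:{0<..}|lborel. g u p)" for p
  define W where "W n p = (\<Sum>r<n. delta n * (real (n - Suc r) / real n) * g (real (Suc r) * delta n) p)" for n p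
  have "\<exists>K. \<forall>n p. 0 < n \<longrightarrow> delta n \<le> 1 \<longrightarrow>
      \<bar>(\<Sum>r. delta n * g (real (Suc r) * delta n) p) - W n p\<bar> \<le> K / (real n * delta n)"
    unfolding W_def by (rule cesaro_riemann_sums_uniformly_close[where B=B and U=U])
      (fact delta_pos g_bound upi_int upi_bdd upi_decr riem_summable)+
  then obtain K where K: "\<forall>n p. 0 < n \<longrightarrow> delta n \<le> 1 \<longrightarrow>
      \<bar>(\<Sum>r. delta n * g (real (Suc r) * delta n) p) - W n p\<bar> \<le> K / (real n * delta n)"
    by blast
  have average_W: "(\<Sum>r<n. delta n * (real (n - Suc r) / real n) * (\<integral>p. \<Psi> n p * g (real (Suc r) * delta n) p \<partial>N))
      = (\<integral>p. \<Psi> n p * W n p \<partial>N)" and \<Psi>W_int: "integrable N (\<lambda>p. \<Psi> n p * W n p)" for n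
  proof -
    have t_pos: "0 < real (Suc r) * delta n" for r using delta_pos[of n] by simp
    show "(\<Sum>r<n. delta n * (real (n - Suc r) / real n) * (\<integral>p. \<Psi> n p * g (real (Suc r) * delta n) p \<partial>N))
        = (\<integral>p. \<Psi> n p * W n p \<partial>N)"
      unfolding W_def by (rule kernel_average_weighted_sum(1)[OF \<Psi>_int \<Psi>_nonneg g_meas g_bound t_pos])
    show "integrable N (\<lambda>p. \<Psi> n p * W n p)"
      unfolding W_def by (rule kernel_average_weighted_sum(2)[OF \<Psi>_int \<Psi>_nonneg g_meas g_bound t_pos])
  qed
  show ?thesis
    unfolding average_W G_def[symmetric]
  proof (rule kernel_average_tendsto[OF \<Psi>_int \<Psi>_one \<Psi>_nonneg \<Psi>W_int])
    fix e :: real assume e: "0 < e"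
    define \<epsilon> where "\<epsilon> = e / 3"
    have \<epsilon>: "0 < \<epsilon>" unfolding \<epsilon>_def using e by simp
    obtain \<eta> where \<eta>: "0 < \<eta>" "\<And>p. dist p p0 < \<eta> \<Longrightarrow> \<bar>G p - G p0\<bar> < \<epsilon>"
      using G_cont \<epsilon> unfolding continuous_at_eps_delta G_def dist_real_def by blast
    have "eventually (\<lambda>n. 0 < n) sequentially" "eventually (\<lambda>n. delta n < 1) sequentially"
      "eventually (\<lambda>n. \<rho> n < \<eta>) sequentially"
      "eventually (\<lambda>n. \<forall>p. \<bar>(\<Sum>r. delta n * g (real (Suc r) * delta n) p) - G p\<bar> \<le> \<epsilon>) sequentially"
      "eventually (\<lambda>n. K / (real n * delta n) < \<epsilon>) sequentially"
      using order_tendstoD(2)[OF delta_lim, of 1] order_tendstoD(2)[OF \<rho>_lim \<eta>(1)] riem_unif[OF \<epsilon>]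
        order_tendstoD(2)[OF tendsto_divide_0[OF tendsto_const filterlim_at_top_imp_at_infinity[OF T_lim]] \<epsilon>]
      by (auto simp: G_def eventually_gt_at_top)
    then show "eventually (\<lambda>n. \<forall>p. \<Psi> n p \<noteq> 0 \<longrightarrow> \<bar>W n p - G p0\<bar> \<le> e) sequentially"
    proof eventually_elim
      case (elim n)
      show ?case
      proof (intro allI impI)
        fix p assume "\<Psi> n p \<noteq> 0"
        then have "\<bar>G p - G p0\<bar> < \<epsilon>" using \<eta>(2) \<Psi>_concentrates elim(3) by force
        moreover have "\<bar>(\<Sum>r. delta n * g (real (Suc r) * delta n) p) - W n p\<bar> \<le> K / (real n * delta n)"
          using K elim(1,2) by simp
        moreover have "\<bar>(\<Sum>r. delta n * g (real (Suc r) * delta n) p) - G p\<bar> \<le> \<epsilon>"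
          using elim(4) by blast
        ultimately show "\<bar>W n p - G p0\<bar> \<le> e" using elim(5) unfolding \<epsilon>_def by linarith
      qed
    qed
  qed
qed

text \<open>The frequency polygon is a kernel estimator: fp_kernel a h x y is the weight an
  observation y receives in the estimate at x, namely the interpolation weights of the two
  bins adjacent to x.  Its normalised tensor square fp_pair_kernel averages the
  autocovariances near (x, x).\<close>

definition fp_kernel :: "real \<Rightarrow> real \<Rightarrow> real \<Rightarrow> real \<Rightarrow> real" where
  "fp_kernel a h x y =
     (let j = poly_index a h x in
       (x - bin_mid a h j) / h * indicator {bin_left a h (j + 1) ..< bin_left a h (j + 1 + 1)} y
       + (bin_mid a h (j + 1) - x) / h * indicator {bin_left a h j ..< bin_left a h (j + 1)} y)"

definition fp_pair_kernel :: "real \<Rightarrow> real \<Rightarrow> real \<Rightarrow> real \<times> real \<Rightarrow> real" where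
  "fp_pair_kernel a h x p = fp_kernel a h x (fst p) / h * (fp_kernel a h x (snd p) / h)"

lemma freq_poly_kernel_form:
  "freq_poly X delta n a h x \<omega>
     = 1 / (real n * h) * (\<Sum>k = 1..n. fp_kernel a h x (X (real k * delta) \<omega>))"
proof -
  have linear: "w1 * (c * (\<Sum>k = 1..n. A k)) + w0 * (c * (\<Sum>k = 1..n. B k))
      = c * (\<Sum>k = 1..n. w1 * A k + w0 * B k)" for w1 w0 c :: real and A B :: "nat \<Rightarrow> real"
    by (simp add: sum.distrib sum_distrib_left algebra_simps)
  show ?thesis
    unfolding freq_poly_def hist_val_def fp_kernel_def Let_def by (rule linear)
qed

lemma poly_index_bounds:
  assumes h: "0 < h"
  shows "bin_mid a h (poly_index a h x) \<le> x" "x < bin_mid a h (poly_index a h x + 1)"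
proof -
  let ?q = "(x - a - h / 2) / h"
  have "real_of_int (poly_index a h x) \<le> ?q" "?q < real_of_int (poly_index a h x) + 1"
    unfolding poly_index_def by linarith+
  then show "bin_mid a h (poly_index a h x) \<le> x" "x < bin_mid a h (poly_index a h x + 1)"
    using h unfolding bin_mid_def bin_left_def
    by (simp_all add: pos_le_divide_eq pos_divide_less_eq algebra_simps)
qed

lemma fp_kernel_explicit:
  assumes h: "0 < h"
  obtains b w where "b + h / 2 \<le> x" "x < b + 3 * h / 2" "0 \<le> w" "w \<le> 1"
    "\<And>y. fp_kernel a h x y = w * indicator {b + h ..< b + 2 * h} y + (1 - w) * indicator {b ..< b + h} y"
proof
  let ?j = "poly_index a h x"
  let ?b = "bin_left a h ?j" and ?w = "(x - bin_mid a h ?j) / h"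
  show "?b + h / 2 \<le> x" "x < ?b + 3 * h / 2"
    using poly_index_bounds[OF h, where a=a and x=x] by (simp_all add: bin_mid_def bin_left_def algebra_simps)
  then show "0 \<le> ?w" "?w \<le> 1" using h by (simp_all add: bin_mid_def)
  have bins: "bin_left a h (?j + 1) = ?b + h" "bin_left a h (?j + 1 + 1) = ?b + 2 * h"
    unfolding bin_left_def by (simp_all add: algebra_simps)
  have weight: "(bin_mid a h (?j + 1) - x) / h = 1 - ?w"
    using h unfolding bin_mid_def bin_left_def by (simp add: field_simps)
  show "fp_kernel a h x y = ?w * indicator {?b + h ..< ?b + 2 * h} y + (1 - ?w) * indicator {?b ..< ?b + h} y" for y
    unfolding fp_kernel_def Let_def bins weight ..
qed

lemma fp_kernel_bounds:
  assumes h: "0 < h"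
  shows "0 \<le> fp_kernel a h x y" "fp_kernel a h x y \<le> 1"
proof -
  obtain b w where "0 \<le> w" "w \<le> 1"
    and K: "fp_kernel a h x y = w * indicator {b + h ..< b + 2 * h} y + (1 - w) * indicator {b ..< b + h} y"
    using fp_kernel_explicit[OF h, where a=a and x=x] by metis
  then show "0 \<le> fp_kernel a h x y" "fp_kernel a h x y \<le> 1"
    by (auto simp: indicator_def)
qed

lemma fp_kernel_support:
  assumes h: "0 < h" and nz: "fp_kernel a h x y \<noteq> 0"
  shows "\<bar>y - x\<bar> < 2 * h"
proof -
  obtain b w where "b + h / 2 \<le> x" "x < b + 3 * h / 2"
    and K: "fp_kernel a h x y = w * indicator {b + h ..< b + 2 * h} y + (1 - w) * indicator {b ..< b + h} y"
    using fp_kernel_explicit[OF h, where a=a and x=x] by metis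
  moreover have "b \<le> y \<and> y < b + 2 * h"
  proof (rule ccontr)
    assume "\<not> (b \<le> y \<and> y < b + 2 * h)"
    then have "fp_kernel a h x y = 0" unfolding K using h by (auto simp: indicator_def)
    then show False using nz by simp
  qed
  ultimately show ?thesis by linarith
qed

lemma fp_kernel_measurable [measurable]: "fp_kernel a h x \<in> borel_measurable borel"
  unfolding fp_kernel_def[abs_def] Let_def by measurable

lemma integrable_interval_indicator: "integrable lborel (indicator {c ..< d} :: real \<Rightarrow> real)"
  by (cases "c \<le> d") (auto simp: integrable_indicator_iff)

lemma fp_kernel_integrable: "integrable lborel (fp_kernel a h x)"
  unfolding fp_kernel_def[abs_def] Let_def
  by (intro Bochner_Integration.integrable_add integrable_mult_right integrable_interval_indicator)

lemma fp_kernel_integral: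
  assumes h: "0 < h"
  shows "integral\<^sup>L lborel (fp_kernel a h x) = h"
proof -
  obtain b w
    where K: "\<And>y. fp_kernel a h x y = w * indicator {b + h ..< b + 2 * h} y + (1 - w) * indicator {b ..< b + h} y"
    using fp_kernel_explicit[OF h, where a=a and x=x] by metis
  have "integral\<^sup>L lborel (fp_kernel a h x) = w * h + (1 - w) * h"
    unfolding K using h integrable_interval_indicator by (simp add: measure_def)
  then show ?thesis by (simp add: algebra_simps)
qed

lemma fp_pair_kernel_nonneg: "0 < h \<Longrightarrow> 0 \<le> fp_pair_kernel a h x p"
  unfolding fp_pair_kernel_def using fp_kernel_bounds by simp

lemma fp_pair_kernel_integrable: "integrable (lborel \<Otimes>\<^sub>M lborel) (fp_pair_kernel a h x)"
  unfolding fp_pair_kernel_def[abs_def] using fp_kernel_integrable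
  by (intro integrable_tensor_lborel) auto

lemma fp_pair_kernel_integral:
  assumes h: "0 < h"
  shows "integral\<^sup>L (lborel \<Otimes>\<^sub>M lborel) (fp_pair_kernel a h x) = 1"
  unfolding fp_pair_kernel_def[abs_def] using fp_kernel_integrable fp_kernel_integral[OF h] h
  by (subst integral_tensor_lborel) auto

text \<open>Both coordinates lie within 2h of x, so the product kernel lives in a ball of radius 4h.\<close>

lemma fp_pair_kernel_support:
  assumes h: "0 < h" and nz: "fp_pair_kernel a h x p \<noteq> 0"
  shows "dist p (x, x) < 4 * h"
proof -
  have "\<bar>fst p - x\<bar> < 2 * h" "\<bar>snd p - x\<bar> < 2 * h"
    using nz fp_kernel_support[OF h] unfolding fp_pair_kernel_def by auto
  moreover have "dist p (x, x) \<le> dist (fst p) x + dist (snd p) x"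
    using dist_Pair_Pair[of "fst p" "snd p" x x] sqrt_sum_squares_le_sum_abs[of "dist (fst p) x" "dist (snd p) x"]
    by simp
  ultimately show ?thesis by (simp add: dist_real_def)
qed

locale stationary_density_process = prob_space M
  for M :: "'a measure" +
  fixes X :: "real \<Rightarrow> 'a \<Rightarrow> real" and f :: "real \<Rightarrow> real" and fj :: "real \<Rightarrow> real \<times> real \<Rightarrow> real"
  assumes f_nonneg: "\<And>y. 0 \<le> f y"
    and marginal: "\<And>t. distributed M lborel (X t) (\<lambda>y. ennreal (f y))"
    and fj_nonneg: "\<And>u p. 0 < u \<Longrightarrow> 0 \<le> fj u p"
    and joint: "\<And>s t. s \<noteq> t \<Longrightarrow>
        distributed M (lborel \<Otimes>\<^sub>M lborel) (\<lambda>\<omega>. (X s \<omega>, X t \<omega>)) (\<lambda>p. ennreal (fj \<bar>t - s\<bar> p))"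
begin

lemma X_measurable [measurable]: "X t \<in> borel_measurable M"
  using distributed_measurable[OF marginal[of t]] by simp

lemma f_measurable [measurable]: "f \<in> borel_measurable borel"
  using distributed_real_measurable[OF _ marginal] f_nonneg by simp

lemma gcov_measurable:
  assumes u: "0 < u"
  shows "gcov fj f u \<in> borel_measurable (lborel \<Otimes>\<^sub>M lborel)"
proof -
  have "fj \<bar>u - 0\<bar> \<in> borel_measurable (lborel \<Otimes>\<^sub>M lborel)"
    using joint[of 0 u] u fj_nonneg by (intro distributed_real_measurable[of _ _ M]) auto
  then have [measurable]: "fj u \<in> borel_measurable (lborel \<Otimes>\<^sub>M lborel)" using u by simp
  show ?thesis unfolding gcov_def[abs_def] by measurable
qed

lemma expectation_kernel:
  fixes K :: "real \<Rightarrow> real"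
  assumes "K \<in> borel_measurable borel"
  shows "expectation (\<lambda>\<omega>. K (X t \<omega>)) = (\<integral>y. f y * K y \<partial>lborel)"
  using distributed_integral[OF marginal[of t], of K] assms f_nonneg by simp

lemma integrable_bounded_kernel:
  fixes K :: "real \<Rightarrow> real"
  assumes [measurable]: "K \<in> borel_measurable borel" and bnd: "\<And>y. \<bar>K y\<bar> \<le> B"
  shows "integrable M (\<lambda>\<omega>. K (X t \<omega>))" "integrable lborel (\<lambda>y. f y * K y)"
proof -
  show i: "integrable M (\<lambda>\<omega>. K (X t \<omega>))"
    using bnd by (intro integrable_const_bound[where B=B]) auto
  show "integrable lborel (\<lambda>y. f y * K y)"
    using distributed_integrable[OF marginal[of t], of K] f_nonneg i by simp
qed

lemma covariance_kernel:
  fixes K :: "real \<Rightarrow> real"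
  assumes [measurable]: "K \<in> borel_measurable borel" and bnd: "\<And>y. \<bar>K y\<bar> \<le> B" and st: "s \<noteq> t"
  shows "expectation (\<lambda>\<omega>. K (X s \<omega>) * K (X t \<omega>))
           - expectation (\<lambda>\<omega>. K (X s \<omega>)) * expectation (\<lambda>\<omega>. K (X t \<omega>))
         = (\<integral>p. K (fst p) * K (snd p) * gcov fj f \<bar>t - s\<bar> p \<partial>(lborel \<Otimes>\<^sub>M lborel))"
proof -
  let ?KK = "\<lambda>p. K (fst p) * K (snd p)"
  have u: "0 < \<bar>t - s\<bar>" using st by simp
  have KK_int: "integrable M (\<lambda>\<omega>. ?KK (X s \<omega>, X t \<omega>))"
    using bnd by (intro integrable_const_bound[where B="B * B"])
      (auto simp: abs_mult intro!: mult_mono order_trans[OF abs_ge_zero bnd])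
  have joint_int: "integrable (lborel \<Otimes>\<^sub>M lborel) (\<lambda>p. fj \<bar>t - s\<bar> p * ?KK p)"
    using distributed_integrable[OF joint[OF st], of ?KK] fj_nonneg[OF u] KK_int by simp
  have joint_E: "expectation (\<lambda>\<omega>. K (X s \<omega>) * K (X t \<omega>))
      = (\<integral>p. fj \<bar>t - s\<bar> p * ?KK p \<partial>(lborel \<Otimes>\<^sub>M lborel))"
    using distributed_integral[OF joint[OF st], of ?KK] fj_nonneg[OF u] by simp
  have fK_int: "integrable lborel (\<lambda>y. f y * K y)"
    using integrable_bounded_kernel[OF assms(1) bnd] by simp
  have product_E: "expectation (\<lambda>\<omega>. K (X s \<omega>)) * expectation (\<lambda>\<omega>. K (X t \<omega>))
      = (\<integral>p. (f (fst p) * K (fst p)) * (f (snd p) * K (snd p)) \<partial>(lborel \<Otimes>\<^sub>M lborel))"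
    unfolding expectation_kernel[OF assms(1)] by (rule integral_tensor_lborel[OF fK_int fK_int, symmetric])
  have "(\<integral>p. fj \<bar>t - s\<bar> p * ?KK p \<partial>(lborel \<Otimes>\<^sub>M lborel))
      - (\<integral>p. (f (fst p) * K (fst p)) * (f (snd p) * K (snd p)) \<partial>(lborel \<Otimes>\<^sub>M lborel))
      = (\<integral>p. ?KK p * gcov fj f \<bar>t - s\<bar> p \<partial>(lborel \<Otimes>\<^sub>M lborel))"
    using joint_int integrable_tensor_lborel[OF fK_int fK_int]
    by (subst Bochner_Integration.integral_diff[symmetric]) (auto simp: gcov_def algebra_simps)
  then show ?thesis unfolding joint_E product_E .
qed

lemma diagonal_covariance_kernel:
  fixes K :: "real \<Rightarrow> real"
  assumes [measurable]: "K \<in> borel_measurable borel" and bnd: "\<And>y. \<bar>K y\<bar> \<le> B"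
  shows "expectation (\<lambda>\<omega>. K (X t \<omega>) * K (X t \<omega>))
           - expectation (\<lambda>\<omega>. K (X t \<omega>)) * expectation (\<lambda>\<omega>. K (X t \<omega>))
         = variance (\<lambda>\<omega>. K (X 0 \<omega>))"
proof -
  have sq_bnd: "\<bar>K y * K y\<bar> \<le> B * B" for y
    unfolding abs_mult using bnd[of y] by (intro mult_mono) (auto intro: order_trans[OF abs_ge_zero])
  have "variance (\<lambda>\<omega>. K (X 0 \<omega>))
      = expectation (\<lambda>\<omega>. K (X 0 \<omega>) * K (X 0 \<omega>)) - (expectation (\<lambda>\<omega>. K (X 0 \<omega>)))\<^sup>2"
    using integrable_bounded_kernel[OF assms(1) bnd] integrable_bounded_kernel[of "\<lambda>y. K y * K y", OF _ sq_bnd]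
    by (subst variance_eq) (auto simp: power2_eq_square)
  moreover have "expectation (\<lambda>\<omega>. K (X t \<omega>) * K (X t \<omega>)) = expectation (\<lambda>\<omega>. K (X 0 \<omega>) * K (X 0 \<omega>))"
    "expectation (\<lambda>\<omega>. K (X t \<omega>)) = expectation (\<lambda>\<omega>. K (X 0 \<omega>))"
    using expectation_kernel[of "\<lambda>y. K y * K y"] expectation_kernel[of K] by simp_all
  ultimately show ?thesis by (simp add: power2_eq_square)
qed

lemma variance_kernel_sum:
  fixes K :: "real \<Rightarrow> real"
  assumes [measurable]: "K \<in> borel_measurable borel" and bnd: "\<And>y. \<bar>K y\<bar> \<le> B" and d: "0 < d"
  shows "variance (\<lambda>\<omega>. c * (\<Sum>k = 1..n. K (X (real k * d) \<omega>)))
    = c\<^sup>2 * (real n * variance (\<lambda>\<omega>. K (X 0 \<omega>))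
        + 2 * (\<Sum>r<n. real (n - Suc r) *
                 (\<integral>p. K (fst p) * K (snd p) * gcov fj f (real (Suc r) * d) p \<partial>(lborel \<Otimes>\<^sub>M lborel))))"
proof -
  define \<gamma> where "\<gamma> r = (if r = 0 then variance (\<lambda>\<omega>. K (X 0 \<omega>))
      else (\<integral>p. K (fst p) * K (snd p) * gcov fj f (real r * d) p \<partial>(lborel \<Otimes>\<^sub>M lborel)))" for r
  have cov: "expectation (\<lambda>\<omega>. K (X (real k * d) \<omega>) * K (X (real l * d) \<omega>))
      - expectation (\<lambda>\<omega>. K (X (real k * d) \<omega>)) * expectation (\<lambda>\<omega>. K (X (real l * d) \<omega>))
      = \<gamma> (nat \<bar>int k - int l\<bar>)" for k l
  proof (cases "k = l")
    case True
    then show ?thesis unfolding \<gamma>_def using diagonal_covariance_kernel[OF assms(1) bnd] by simp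
  next
    case False
    have lag: "\<bar>real l * d - real k * d\<bar> = real (nat \<bar>int k - int l\<bar>) * d"
      using d by (simp add: left_diff_distrib[symmetric] abs_mult of_nat_nat)
    show ?thesis
      using covariance_kernel[OF assms(1) bnd, where s="real k * d" and t="real l * d"] False d
      unfolding \<gamma>_def lag by simp
  qed
  have "variance (\<lambda>\<omega>. c * (\<Sum>k = 1..n. K (X (real k * d) \<omega>)))
      = c\<^sup>2 * (\<Sum>k = 1..n. \<Sum>l = 1..n. \<gamma> (nat \<bar>int k - int l\<bar>))"
    using bnd by (subst variance_scaled_sum[where B=B]) (auto simp: cov)
  also have "(\<Sum>k = 1..n. \<Sum>l = 1..n. \<gamma> (nat \<bar>int k - int l\<bar>)) = (\<Sum>k<n. \<Sum>l<n. \<gamma> (nat \<bar>int k - int l\<bar>))"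
    unfolding One_nat_def sum.atLeast1_atMost_eq by simp
  also have "\<dots> = real n * \<gamma> 0 + 2 * (\<Sum>r<n. real (n - Suc r) * \<gamma> (Suc r))"
    by (rule double_sum_abs_diff)
  finally show ?thesis unfolding \<gamma>_def by simp
qed

lemma variance_kernel_le:
  fixes K :: "real \<Rightarrow> real"
  assumes [measurable]: "K \<in> borel_measurable borel"
    and K_nonneg: "\<And>y. 0 \<le> K y" and K_le: "\<And>y. K y \<le> 1"
    and K_int: "integrable lborel K" and f_le: "\<And>y. f y \<le> F"
  shows "variance (\<lambda>\<omega>. K (X 0 \<omega>)) \<le> F * integral\<^sup>L lborel K"
proof -
  have bnd: "\<bar>K y\<bar> \<le> 1" for y using K_nonneg[of y] K_le[of y] by simp
  have sq_le: "K y * K y \<le> K y" for y using K_nonneg[of y] K_le[of y] by (simp add: mult_left_le)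
  have sq_bnd: "\<bar>K y * K y\<bar> \<le> 1" for y using K_nonneg[of y] K_le[of y] by (simp add: mult_le_one)
  have "variance (\<lambda>\<omega>. K (X 0 \<omega>))
      = expectation (\<lambda>\<omega>. K (X 0 \<omega>) * K (X 0 \<omega>)) - (expectation (\<lambda>\<omega>. K (X 0 \<omega>)))\<^sup>2"
    using diagonal_covariance_kernel[OF assms(1) bnd, of 0] by (simp add: power2_eq_square)
  also have "\<dots> \<le> expectation (\<lambda>\<omega>. K (X 0 \<omega>) * K (X 0 \<omega>))" by simp
  also have "\<dots> \<le> expectation (\<lambda>\<omega>. K (X 0 \<omega>))"
    using integrable_bounded_kernel[OF assms(1) bnd] integrable_bounded_kernel[of "\<lambda>y. K y * K y", OF _ sq_bnd]
    by (intro integral_mono) (auto simp: sq_le)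
  also have "\<dots> = (\<integral>y. f y * K y \<partial>lborel)" by (rule expectation_kernel) simp
  also have "\<dots> \<le> (\<integral>y. F * K y \<partial>lborel)"
    using integrable_bounded_kernel[OF assms(1) bnd] K_int K_nonneg f_le
    by (intro integral_mono) (auto intro: mult_right_mono)
  finally show ?thesis by simp
qed

lemma freq_poly_scaled_variance:
  assumes n: "0 < n" and h: "0 < h" and d: "0 < d"
  shows "real n * d * variance (freq_poly X d n a h x)
    = d / h\<^sup>2 * variance (\<lambda>\<omega>. fp_kernel a h x (X 0 \<omega>))
      + 2 * (\<Sum>r<n. d * (real (n - Suc r) / real n) *
           (\<integral>p. fp_pair_kernel a h x p * gcov fj f (real (Suc r) * d) p \<partial>(lborel \<Otimes>\<^sub>M lborel)))"
proof -
  let ?K = "fp_kernel a h x"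
  have bnd: "\<bar>?K y\<bar> \<le> 1" for y using fp_kernel_bounds[OF h] by (simp add: abs_le_iff)
  have pair: "(\<integral>p. ?K (fst p) * ?K (snd p) * gcov fj f u p \<partial>(lborel \<Otimes>\<^sub>M lborel))
      = h\<^sup>2 * (\<integral>p. fp_pair_kernel a h x p * gcov fj f u p \<partial>(lborel \<Otimes>\<^sub>M lborel))" for u
    using h by (simp add: fp_pair_kernel_def power2_eq_square field_simps flip: integral_mult_right_zero)
  have "variance (freq_poly X d n a h x)
      = (1 / (real n * h))\<^sup>2 * (real n * variance (\<lambda>\<omega>. ?K (X 0 \<omega>))
        + 2 * (\<Sum>r<n. real (n - Suc r) * (h\<^sup>2 *
            (\<integral>p. fp_pair_kernel a h x p * gcov fj f (real (Suc r) * d) p \<partial>(lborel \<Otimes>\<^sub>M lborel)))))"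
  proof -
    have "freq_poly X d n a h x = (\<lambda>\<omega>. 1 / (real n * h) * (\<Sum>k = 1..n. ?K (X (real k * d) \<omega>)))"
      by (rule ext) (rule freq_poly_kernel_form)
    then show ?thesis by (simp only: variance_kernel_sum[OF fp_kernel_measurable bnd d] pair)
  qed
  moreover have "real n * d * ((1 / (real n * h))\<^sup>2 * (real n * V + 2 * (\<Sum>r<n. real (n - Suc r) * (h\<^sup>2 * C r))))
      = d / h\<^sup>2 * V + 2 * (\<Sum>r<n. d * (real (n - Suc r) / real n) * C r)" for V and C :: "nat \<Rightarrow> real"
  proof -
    have "(\<Sum>r<n. real (n - Suc r) * (h\<^sup>2 * C r)) = h\<^sup>2 * (\<Sum>r<n. real (n - Suc r) * C r)"
      "(\<Sum>r<n. d * (real (n - Suc r) / real n) * C r) = d / real n * (\<Sum>r<n. real (n - Suc r) * C r)"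
      unfolding sum_distrib_left by (auto intro!: sum.cong)
    then show ?thesis using n h by (simp add: field_simps power2_eq_square)
  qed
  ultimately show ?thesis by simp
qed

text \<open>The diagonal term is O(delta / h), hence vanishes when delta = o(h).\<close>

lemma fp_diagonal_term_vanishes:
  fixes a h delta :: "nat \<Rightarrow> real"
  assumes h_pos: "\<And>n. 0 < h n" and delta_pos: "\<And>n. 0 < delta n"
    and f_le: "\<And>y. f y \<le> F" and delta_o_h: "(\<lambda>n. delta n / h n) \<longlonglongrightarrow> 0"
  shows "(\<lambda>n. delta n / (h n)\<^sup>2 * variance (\<lambda>\<omega>. fp_kernel (a n) (h n) x (X 0 \<omega>))) \<longlonglongrightarrow> 0"
proof (rule Lim_null_comparison)
  show "(\<lambda>n. F * (delta n / h n)) \<longlonglongrightarrow> 0"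
    using tendsto_mult_right_zero[OF delta_o_h] .
  show "eventually (\<lambda>n. norm (delta n / (h n)\<^sup>2 * variance (\<lambda>\<omega>. fp_kernel (a n) (h n) x (X 0 \<omega>)))
      \<le> F * (delta n / h n)) sequentially"
  proof (intro always_eventually allI)
    fix n
    let ?V = "variance (\<lambda>\<omega>. fp_kernel (a n) (h n) x (X 0 \<omega>))"
    have "0 \<le> ?V" by (intro integral_nonneg_AE) auto
    moreover have "?V \<le> F * h n"
      using variance_kernel_le[OF fp_kernel_measurable fp_kernel_bounds(1)[OF h_pos]
          fp_kernel_bounds(2)[OF h_pos] fp_kernel_integrable f_le]
        fp_kernel_integral[OF h_pos] by simp
    ultimately have "norm (delta n / (h n)\<^sup>2 * ?V) \<le> delta n / (h n)\<^sup>2 * (F * h n)"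
      using delta_pos[of n] h_pos[of n] by (simp add: mult_left_mono divide_right_mono)
    also have "\<dots> = F * (delta n / h n)" using h_pos[of n] by (simp add: power2_eq_square)
    finally show "norm (delta n / (h n)\<^sup>2 * ?V) \<le> F * (delta n / h n)" .
  qed
qed

end

theorem proposition2:
  fixes M :: "'a measure"
    and X :: "real \<Rightarrow> 'a \<Rightarrow> real"
    and f :: "real \<Rightarrow> real"
    and fj :: "real \<Rightarrow> real \<times> real \<Rightarrow> real"
    and \<pi> :: "real \<Rightarrow> real"
    and delta h a :: "nat \<Rightarrow> real"
    and x :: real
  assumes prob: "prob_space M"
    and meas_proc: "(\<lambda>(t, \<omega>). X t \<omega>) \<in> borel_measurable (lborel \<Otimes>\<^sub>M M)"
    and f_nonneg: "\<And>y. 0 \<le> f y"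
    and marg: "\<And>t. distributed M lborel (X t) (\<lambda>y. ennreal (f y))"
    and fj_nonneg: "\<And>u p. 0 < u \<Longrightarrow> 0 \<le> fj u p"
    and joint: "\<And>s t. s \<noteq> t \<Longrightarrow>
        distributed M (lborel \<Otimes>\<^sub>M lborel) (\<lambda>\<omega>. (X s \<omega>, X t \<omega>)) (\<lambda>p. ennreal (fj \<bar>t - s\<bar> p))"
    and fj_meas: "\<And>p. (\<lambda>u. fj u p) \<in> borel_measurable borel"
    and f_cont: "continuous_on UNIV f"
    and f_bdd: "bounded (range f)"
    and delta_pos: "\<And>n. 0 < delta n"
    and delta_lim: "delta \<longlonglongrightarrow> 0"
    and T_lim: "filterlim (\<lambda>n. real n * delta n) at_top sequentially"
    and h_pos: "\<And>n. 0 < h n"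
    and h_lim: "h \<longlonglongrightarrow> 0"
    and nh_lim: "filterlim (\<lambda>n. real n * h n) at_top sequentially"
    and g_bound: "\<And>u p. 0 < u \<Longrightarrow> \<bar>gcov fj f u p\<bar> \<le> \<pi> u"
    and pi_int: "set_integrable lborel {0<..} (\<lambda>u. (1 + u) * \<pi> u)"
    and upi_bdd: "\<exists>B. \<forall>u>0. \<bar>u * \<pi> u\<bar> \<le> B"
    and upi_decr: "\<exists>U. \<forall>u v. U \<le> u \<longrightarrow> u \<le> v \<longrightarrow> v * \<pi> v \<le> u * \<pi> u"
    and g_cont: "\<And>u. 0 < u \<Longrightarrow> isCont (gcov fj f u) (x, x)"
    and riem_summable: "\<And>n p. summable (\<lambda>r. delta n * gcov fj f (real (Suc r) * delta n) p)"
    and riem_unif: "\<And>\<epsilon>. 0 < \<epsilon> \<Longrightarrow> eventually (\<lambda>n. \<forall>p.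
        \<bar>(\<Sum>r. delta n * gcov fj f (real (Suc r) * delta n) p)
          - (LINT u:{0<..}|lborel. gcov fj f u p)\<bar> \<le> \<epsilon>) sequentially"
    and delta_o_h: "(\<lambda>n. delta n / h n) \<longlonglongrightarrow> 0"
  shows "(\<lambda>n. real n * delta n * prob_space.variance M (freq_poly X (delta n) n (a n) (h n) x))
           \<longlonglongrightarrow> 2 * (LINT u:{0<..}|lborel. gcov fj f u (x, x))"
proof -
  interpret stationary_density_process M X f fj
    using prob f_nonneg marg fj_nonneg joint
    by (intro stationary_density_process.intro stationary_density_process_axioms.intro)
  obtain F where F: "\<And>y. f y \<le> F"
    using f_bdd unfolding bounded_iff by (metis abs_le_D1 rangeI real_norm_def)
  obtain B where B: "\<And>u. 0 < u \<Longrightarrow> u * \<pi> u \<le> B" using upi_bdd by (metis abs_le_D1)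
  obtain U where U: "\<And>u v. U \<le> u \<Longrightarrow> u \<le> v \<Longrightarrow> v * \<pi> v \<le> u * \<pi> u" using upi_decr by blast
  have \<pi>_nonneg: "0 \<le> \<pi> u" if "0 < u" for u using g_bound[OF that, of "(0, 0)"] by linarith
  have g_param_meas: "(\<lambda>u. gcov fj f u p) \<in> borel_measurable borel" for p
    using fj_meas[of p] unfolding gcov_def by simp
  have G_cont: "isCont (\<lambda>p. LINT u:{0<..}|lborel. gcov fj f u p) (x, x)"
    using set_integrable_from_weighted(1)[OF pi_int \<pi>_nonneg] g_param_meas g_bound g_cont
    by (intro isCont_parametric_set_integral) auto
  have diagonal: "(\<lambda>n. delta n / (h n)\<^sup>2 * variance (\<lambda>\<omega>. fp_kernel (a n) (h n) x (X 0 \<omega>))) \<longlonglongrightarrow> 0"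
    using fp_diagonal_term_vanishes[OF h_pos delta_pos F delta_o_h] .
  have autocovariances: "(\<lambda>n. \<Sum>r<n. delta n * (real (n - Suc r) / real n) *
      (\<integral>p. fp_pair_kernel (a n) (h n) x p * gcov fj f (real (Suc r) * delta n) p \<partial>(lborel \<Otimes>\<^sub>M lborel)))
      \<longlonglongrightarrow> (LINT u:{0<..}|lborel. gcov fj f u (x, x))"
    using fp_pair_kernel_nonneg[OF h_pos] fp_pair_kernel_integrable fp_pair_kernel_integral[OF h_pos]
      fp_pair_kernel_support[OF h_pos] gcov_measurable g_bound B U
      set_integrable_from_weighted(2)[OF pi_int \<pi>_nonneg]
    by (intro kernel_averaged_cesaro_limit[OF delta_pos delta_lim T_lim, where \<rho>="\<lambda>n. 4 * h n"]
        tendsto_mult_right_zero h_lim G_cont riem_summable riem_unif) auto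
  have decomposition: "eventually (\<lambda>n. delta n / (h n)\<^sup>2 * variance (\<lambda>\<omega>. fp_kernel (a n) (h n) x (X 0 \<omega>))
        + 2 * (\<Sum>r<n. delta n * (real (n - Suc r) / real n) *
            (\<integral>p. fp_pair_kernel (a n) (h n) x p * gcov fj f (real (Suc r) * delta n) p \<partial>(lborel \<Otimes>\<^sub>M lborel)))
      = real n * delta n * variance (freq_poly X (delta n) n (a n) (h n) x)) sequentially"
    using eventually_gt_at_top[of 0]
    by eventually_elim (rule freq_poly_scaled_variance[OF _ h_pos delta_pos, symmetric])
  show ?thesis
    using Lim_transform_eventually[OF tendsto_add[OF diagonal tendsto_mult[OF tendsto_const autocovariances]]
        decomposition] by simp
qed

end
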